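(* Every trigraph $G$ admits a partial contraction sequence of width at most $4\Delta(G)$ whose final quotient is an asymmetric trigraph $H$ with $\Delta(H)\leq\Delta(G)$.
   Context: A trigraph is a finite simple graph whose edges are each colored red or black; $\Delta$ denotes maximum degree (both colors). A trigraph is asymmetric if the automorphism group of its underlying simple graph is trivial. The red degree of a vertex is the number of red edges incident to it. For a partition $\mathcal{P}$ of $V(G)$, the quotient trigraph $G/\mathcal{P}$ has vertex set $\mathcal{P}$; two distinct parts $U,W$ are joined by a black edge if every pair $\{u,w\}$ with $u\in U,w\in W$ is a black edge of $G$, are non-adjacent if no such pair is an edge, and are joined by a red edge otherwise. A partial contraction sequence of an $n$-vertex trigraph $G$ is a sequence $\mathcal{P}_n,\dots,\mathcal{P}_i$ of partitions of $V(G)$ where $\mathcal{P}_n$ is the partition into singletons and each $\mathcal{P}_j$ arises from $\mathcal{P}_{j+1}$ by merging two parts; its width is the maximum red degree over all $G/\mathcal{P}_j$ in the sequence, and its final quotient is $G/\mathcal{P}_i$. *)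

theory Defs
  imports Main
begin

record 'a trigraph =
  verts :: "'a set"
  edges :: "'a set set"
  red   :: "'a set set"

definition is_trigraph :: "'a trigraph \<Rightarrow> bool" where
  "is_trigraph G \<longleftrightarrow> finite (verts G)
     \<and> edges G \<subseteq> {{u, v} | u v. u \<in> verts G \<and> v \<in> verts G \<and> u \<noteq> v}
     \<and> red G \<subseteq> edges G"

definition black :: "'a trigraph \<Rightarrow> 'a set set" where
  "black G = edges G - red G"

definition degree :: "'a trigraph \<Rightarrow> 'a \<Rightarrow> nat" where
  "degree G v = card {e \<in> edges G. v \<in> e}"

definition red_degree :: "'a trigraph \<Rightarrow> 'a \<Rightarrow> nat" where
  "red_degree G v = card {e \<in> red G. v \<in> e}"

definition max_degree :: "'a trigraph \<Rightarrow> nat" where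
  "max_degree G = Max (insert 0 (degree G ` verts G))"

definition max_red_degree :: "'a trigraph \<Rightarrow> nat" where
  "max_red_degree G = Max (insert 0 (red_degree G ` verts G))"

text \<open>Asymmetric: the underlying simple graph has only the trivial automorphism.\<close>
definition asymmetric :: "'a trigraph \<Rightarrow> bool" where
  "asymmetric G \<longleftrightarrow>
     (\<forall>f. bij_betw f (verts G) (verts G)
          \<and> (\<forall>u\<in>verts G. \<forall>v\<in>verts G. {u, v} \<in> edges G \<longleftrightarrow> {f u, f v} \<in> edges G)
        \<longrightarrow> (\<forall>v\<in>verts G. f v = v))"

definition quot_trigraph :: "'a trigraph \<Rightarrow> 'a set set \<Rightarrow> 'a set trigraph" where
  "quot_trigraph G P =
    \<lparr> verts = P,
      edges = {{U, W} | U W. U \<in> P \<and> W \<in> P \<and> U \<noteq> W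
                 \<and> (\<exists>u\<in>U. \<exists>w\<in>W. {u, w} \<in> edges G)},
      red = {{U, W} | U W. U \<in> P \<and> W \<in> P \<and> U \<noteq> W
                 \<and> (\<exists>u\<in>U. \<exists>w\<in>W. {u, w} \<in> edges G)
                 \<and> \<not> (\<forall>u\<in>U. \<forall>w\<in>W. {u, w} \<in> black G)} \<rparr>"

definition singletons :: "'a set \<Rightarrow> 'a set set" where
  "singletons V = (\<lambda>v. {v}) ` V"

definition merge_step :: "'a set set \<Rightarrow> 'a set set \<Rightarrow> bool" where
  "merge_step P Q \<longleftrightarrow> (\<exists>U\<in>P. \<exists>W\<in>P. U \<noteq> W \<and> Q = insert (U \<union> W) (P - {U, W}))"

text \<open>A partial contraction sequence P_n, ..., P_i, given as the list [P_n, ..., P_i].\<close>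
definition partial_contraction_sequence :: "'a trigraph \<Rightarrow> 'a set set list \<Rightarrow> bool" where
  "partial_contraction_sequence G ps \<longleftrightarrow>
     ps \<noteq> [] \<and> hd ps = singletons (verts G)
     \<and> (\<forall>k. Suc k < length ps \<longrightarrow> merge_step (ps ! k) (ps ! Suc k))"

definition seq_width :: "'a trigraph \<Rightarrow> 'a set set list \<Rightarrow> nat" where
  "seq_width G ps = Max (insert 0 ((\<lambda>P. max_red_degree (quot_trigraph G P)) ` set ps))"

end

(*
  Keep a partition P of V(G) with Delta(G/P) <= Delta(G), starting from the singletons. While
  G/P has a nontrivial automorphism sigma, pass to the partition into the unions of the
  sigma-orbits of the parts of P. This strictly lowers the number of parts and does not raise the
  maximum degree, because the neighbours of the orbit of X are the orbits of the neighbours of X.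

  The orbits are merged gradually, so that the red degree stays at most 4 Delta(G) on the way.
  Number the parts of each orbit 0, 1, ..., p-1 by their distance from a representative R. In
  round k, the blocks [2t 2^k, (2t+1) 2^k) and [(2t+1) 2^k, (2t+2) 2^k) of indices are merged one
  pair at a time. At every moment a current part consists of the parts sigma^i R with i in a window
  of 2^(k+1) consecutive indices, so its neighbours are among the shifts sigma^i B, i in the window,
  of the at most Delta neighbours B of R. In the orbit of B these shifts form a cyclic window of
  length 2^(k+1), while every current part there is a block of at least 2^k consecutive indices,
  except possibly the last one; hence the window meets at most 4 current parts.
*)

theory Submission
  imports Defs "HOL-Library.Disjoint_Sets" "HOL-Combinatorics.Permutations" "HOL-Combinatorics.Perm"
begin

unbundle permutation_syntax

section \<open>Degrees in quotient trigraphs\<close>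

definition quot_nbrs :: "'a trigraph \<Rightarrow> 'a set set \<Rightarrow> 'a set \<Rightarrow> 'a set set" where
  "quot_nbrs G P X = {W \<in> P. W \<noteq> X \<and> (\<exists>u\<in>X. \<exists>w\<in>W. {u, w} \<in> edges G)}"

lemma verts_quot_trigraph [simp]: "verts (quot_trigraph G P) = P"
  by (simp add: quot_trigraph_def)

lemma edge_quot_trigraphE:
  assumes "e \<in> edges (quot_trigraph G P)"
  obtains U W where "e = {U, W}" "U \<in> P" "W \<in> P"
  using assms unfolding quot_trigraph_def by auto

lemma edge_quot_trigraph_iff:
  assumes "U \<in> P" "W \<in> P"
  shows "{U, W} \<in> edges (quot_trigraph G P) \<longleftrightarrow> W \<in> quot_nbrs G P U"
proof
  assume "{U, W} \<in> edges (quot_trigraph G P)"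
  then obtain U' W' where e: "{U, W} = {U', W'}" "U' \<noteq> W'"
    "\<exists>u\<in>U'. \<exists>w\<in>W'. {u, w} \<in> edges G"
    unfolding quot_trigraph_def by auto
  from e(1) have "U = U' \<and> W = W' \<or> U = W' \<and> W = U'"
    by (simp add: doubleton_eq_iff)
  then show "W \<in> quot_nbrs G P U"
  proof
    assume "U = W' \<and> W = U'"
    then have "\<exists>u\<in>U. \<exists>w\<in>W. {w, u} \<in> edges G"
      using e(3) by blast
    then show ?thesis
      using e(2) \<open>U = W' \<and> W = U'\<close> assms by (auto simp: quot_nbrs_def insert_commute)
  qed (use e assms in \<open>auto simp: quot_nbrs_def\<close>)
next
  assume "W \<in> quot_nbrs G P U"
  then show "{U, W} \<in> edges (quot_trigraph G P)"
    using assms unfolding quot_nbrs_def quot_trigraph_def by auto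
qed

lemma edges_at_quot_trigraph:
  assumes "X \<in> P"
  shows "{e \<in> edges (quot_trigraph G P). X \<in> e} = (\<lambda>W. {X, W}) ` quot_nbrs G P X"
proof
  show "{e \<in> edges (quot_trigraph G P). X \<in> e} \<subseteq> (\<lambda>W. {X, W}) ` quot_nbrs G P X"
  proof safe
    fix e assume e: "e \<in> edges (quot_trigraph G P)" "X \<in> e"
    from e(1) obtain U W where UW: "e = {U, W}" "U \<in> P" "W \<in> P"
      by (rule edge_quot_trigraphE)
    show "e \<in> (\<lambda>W. {X, W}) ` quot_nbrs G P X"
    proof (cases "X = U")
      case True
      then show ?thesis
        using e UW edge_quot_trigraph_iff[OF UW(2,3)] by blast
    next
      case False
      then have "X = W" "e = {W, U}"
        using e(2) UW(1) by auto
      then show ?thesis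
        using e(1) edge_quot_trigraph_iff[OF UW(3,2)] by blast
    qed
  qed
qed (use edge_quot_trigraph_iff[OF assms] in \<open>auto simp: quot_nbrs_def\<close>)

lemma degree_quot_trigraph:
  assumes "X \<in> P"
  shows "degree (quot_trigraph G P) X = card (quot_nbrs G P X)"
proof -
  have "inj_on (\<lambda>W. {X, W}) (quot_nbrs G P X)"
    by (auto simp: inj_on_def quot_nbrs_def doubleton_eq_iff)
  then show ?thesis
    by (simp add: degree_def edges_at_quot_trigraph[OF assms] card_image)
qed

lemma max_degree_quot_trigraph_le:
  assumes "finite P" "\<And>X. X \<in> P \<Longrightarrow> card (quot_nbrs G P X) \<le> d"
  shows "max_degree (quot_trigraph G P) \<le> d"
  using assms by (simp add: max_degree_def degree_quot_trigraph)

lemma card_quot_nbrs_le_max_degree: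
  assumes "finite P" "X \<in> P"
  shows "card (quot_nbrs G P X) \<le> max_degree (quot_trigraph G P)"
  using assms by (simp add: max_degree_def degree_quot_trigraph[symmetric])

lemma max_red_degree_le_max_degree_quot_trigraph:
  assumes "finite P"
  shows "max_red_degree (quot_trigraph G P) \<le> max_degree (quot_trigraph G P)"
proof -
  have "red_degree (quot_trigraph G P) X \<le> degree (quot_trigraph G P) X" if "X \<in> P" for X
  proof -
    have "finite {e \<in> edges (quot_trigraph G P). X \<in> e}"
      using assms by (simp add: edges_at_quot_trigraph[OF that] quot_nbrs_def)
    moreover have "red (quot_trigraph G P) \<subseteq> edges (quot_trigraph G P)"
      by (auto simp: quot_trigraph_def)
    ultimately show ?thesis
      unfolding red_degree_def degree_def by (blast intro: card_mono)
  qed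
  also have "degree (quot_trigraph G P) X \<le> max_degree (quot_trigraph G P)" if "X \<in> P" for X
    using assms that by (simp add: max_degree_def)
  finally show ?thesis
    using assms by (simp add: max_red_degree_def)
qed

lemma max_degree_quot_singletons:
  assumes "is_trigraph G"
  shows "max_degree (quot_trigraph G (singletons (verts G))) \<le> max_degree G"
proof (rule max_degree_quot_trigraph_le)
  have fin: "finite (verts G)" and "edges G \<subseteq> Pow (verts G)"
    using assms unfolding is_trigraph_def by auto
  then have finE: "finite (edges G)"
    by (meson finite_Pow_iff finite_subset)
  show "finite (singletons (verts G))"
    using fin by (simp add: singletons_def)
  fix X assume "X \<in> singletons (verts G)"
  then obtain v where v: "v \<in> verts G" "X = {v}"
    by (auto simp: singletons_def)
  have "quot_nbrs G (singletons (verts G)) X \<subseteq> (\<lambda>e. e - {v}) ` {e \<in> edges G. v \<in> e}"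
  proof
    fix W assume "W \<in> quot_nbrs G (singletons (verts G)) X"
    then obtain w where "W = {v, w} - {v}" "{v, w} \<in> edges G"
      by (auto simp: quot_nbrs_def singletons_def v(2))
    then show "W \<in> (\<lambda>e. e - {v}) ` {e \<in> edges G. v \<in> e}"
      by blast
  qed
  then have "card (quot_nbrs G (singletons (verts G)) X) \<le> card ((\<lambda>e. e - {v}) ` {e \<in> edges G. v \<in> e})"
    using finE by (simp add: card_mono)
  also have "\<dots> \<le> card {e \<in> edges G. v \<in> e}"
    using finE by (simp add: card_image_le)
  also have "\<dots> \<le> max_degree G"
    unfolding degree_def[symmetric] max_degree_def using fin v by (intro Max_ge) auto
  finally show "card (quot_nbrs G (singletons (verts G)) X) \<le> max_degree G" .
qed

definition bounded_merge :: "'a trigraph \<Rightarrow> nat \<Rightarrow> 'a set set \<Rightarrow> 'a set set \<Rightarrow> bool" where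
  "bounded_merge G w P Q \<longleftrightarrow> merge_step P Q \<and> max_red_degree (quot_trigraph G Q) \<le> w"

lemma seq_width_le_iff:
  "seq_width G ps \<le> w \<longleftrightarrow> (\<forall>P\<in>set ps. max_red_degree (quot_trigraph G P) \<le> w)"
  by (simp add: seq_width_def)

lemma partial_contraction_sequence_snoc:
  assumes "partial_contraction_sequence G ps" "merge_step (last ps) Q"
  shows "partial_contraction_sequence G (ps @ [Q])"
proof -
  have "merge_step ((ps @ [Q]) ! k) ((ps @ [Q]) ! Suc k)" if "Suc k < length (ps @ [Q])" for k
  proof (cases "Suc k < length ps")
    case True
    then show ?thesis
      using assms(1) by (simp add: partial_contraction_sequence_def nth_append)
  next
    case False
    then have "k = length ps - 1" "ps \<noteq> []"
      using that assms(1) by (auto simp: partial_contraction_sequence_def)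
    then show ?thesis
      using assms(2) by (simp add: nth_append last_conv_nth)
  qed
  then show ?thesis
    using assms(1) by (simp add: partial_contraction_sequence_def)
qed

lemma partial_contraction_sequence_of_bounded_merges:
  assumes "(bounded_merge G w)\<^sup>*\<^sup>* (singletons (verts G)) P"
    and "max_red_degree (quot_trigraph G (singletons (verts G))) \<le> w"
  shows "\<exists>ps. partial_contraction_sequence G ps \<and> seq_width G ps \<le> w \<and> last ps = P"
  using assms(1)
proof (induction rule: rtranclp_induct)
  case base
  show ?case
    using assms(2) by (intro exI[of _ "[singletons (verts G)]"])
      (simp add: partial_contraction_sequence_def seq_width_le_iff)
next
  case (step Q Q')
  then obtain ps where "partial_contraction_sequence G ps" "seq_width G ps \<le> w" "last ps = Q"
    by blast
  with step.hyps(2) show ?case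
    by (intro exI[of _ "ps @ [Q']"])
      (simp add: partial_contraction_sequence_snoc bounded_merge_def seq_width_le_iff)
qed

section \<open>Coarsening a partition along a labelling\<close>

definition label_class :: "'b set set \<Rightarrow> ('b set \<Rightarrow> 'k) \<Rightarrow> 'k \<Rightarrow> 'b set" where
  "label_class P \<kappa> z = \<Union>{A \<in> P. \<kappa> A = z}"

definition coarsening :: "'b set set \<Rightarrow> ('b set \<Rightarrow> 'k) \<Rightarrow> 'b set set" where
  "coarsening P \<kappa> = label_class P \<kappa> ` \<kappa> ` P"

lemma coarsening_conv: "coarsening P \<kappa> = (\<lambda>A. label_class P \<kappa> (\<kappa> A)) ` P"
  by (simp add: coarsening_def image_image)

lemma finite_coarsening: "finite P \<Longrightarrow> finite (coarsening P \<kappa>)"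
  by (simp add: coarsening_def)

lemma coarsening_cong:
  assumes "\<And>A. A \<in> P \<Longrightarrow> \<kappa> A = \<kappa>' A"
  shows "coarsening P \<kappa> = coarsening P \<kappa>'"
proof -
  have "label_class P \<kappa> = label_class P \<kappa>'"
    unfolding label_class_def using assms by (intro ext arg_cong[where f = Union]) auto
  then show ?thesis
    using assms by (simp add: coarsening_conv)
qed

lemma coarsening_comp_inj:
  assumes "inj_on h (\<kappa> ` P)"
  shows "coarsening P (h \<circ> \<kappa>) = coarsening P \<kappa>"
proof -
  have "{B \<in> P. h (\<kappa> B) = h (\<kappa> A)} = {B \<in> P. \<kappa> B = \<kappa> A}" if "A \<in> P" for A
    using assms that by (auto dest: inj_onD)
  then show ?thesis
    by (simp add: coarsening_conv label_class_def cong: image_cong)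
qed

lemma coarsening_inj: "inj_on \<kappa> P \<Longrightarrow> coarsening P \<kappa> = P"
proof -
  assume "inj_on \<kappa> P"
  then have "{B \<in> P. \<kappa> B = \<kappa> A} = {A}" if "A \<in> P" for A
    using that by (auto dest: inj_onD)
  then show ?thesis
    by (simp add: coarsening_conv label_class_def cong: image_cong)
qed

lemma partition_on_coarsening:
  assumes "partition_on V P"
  shows "partition_on V (coarsening P \<kappa>)"
proof (rule partition_onI)
  show "\<Union>(coarsening P \<kappa>) = V"
    using partition_onD1[OF assms] by (auto simp: coarsening_def label_class_def)
  show "{} \<notin> coarsening P \<kappa>"
    using partition_onD3[OF assms] by (auto simp: coarsening_def label_class_def)
  show "disjnt X Y" if XY: "X \<in> coarsening P \<kappa>" "Y \<in> coarsening P \<kappa>" "X \<noteq> Y" for X Y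
  proof -
    obtain A B where AB: "A \<in> P" "B \<in> P" "X = label_class P \<kappa> (\<kappa> A)" "Y = label_class P \<kappa> (\<kappa> B)"
      using XY(1,2) by (auto simp: coarsening_conv)
    then have "\<kappa> A \<noteq> \<kappa> B"
      using XY(3) by auto
    then show ?thesis
      using partition_onD2[OF assms] AB(3,4)
      by (auto simp: label_class_def disjnt_def dest: disjointD)
  qed
qed

lemma inj_on_label_class:
  assumes "partition_on V P"
  shows "inj_on (label_class P \<kappa>) (\<kappa> ` P)"
proof (rule inj_onI)
  fix z1 z2 assume z: "z1 \<in> \<kappa> ` P" "z2 \<in> \<kappa> ` P" "label_class P \<kappa> z1 = label_class P \<kappa> z2"
  then obtain A where "A \<in> P" "\<kappa> A = z1" "A \<subseteq> label_class P \<kappa> z2"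
    by (auto simp: label_class_def)
  moreover have "A \<noteq> {}"
    using partition_onD3[OF assms] \<open>A \<in> P\<close> by blast
  ultimately obtain B where "B \<in> P" "\<kappa> B = z2" "A \<inter> B \<noteq> {}"
    by (auto simp: label_class_def)
  then show "z1 = z2"
    using partition_onD2[OF assms] \<open>A \<in> P\<close> \<open>\<kappa> A = z1\<close> by (metis disjointD)
qed

lemma merge_step_coarsening_comp:
  assumes P: "partition_on V P"
    and z: "z1 \<in> \<kappa> ` P" "z2 \<in> \<kappa> ` P" "z1 \<noteq> z2" "h z1 = h z2"
    and only: "\<And>x y. x \<in> \<kappa> ` P \<Longrightarrow> y \<in> \<kappa> ` P \<Longrightarrow> h x = h y \<Longrightarrow> x = y \<or> {x, y} = {z1, z2}"
  shows "merge_step (coarsening P \<kappa>) (coarsening P (h \<circ> \<kappa>))"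
proof -
  let ?C = "label_class P \<kappa>"
  have inj: "inj_on ?C (\<kappa> ` P)"
    by (rule inj_on_label_class[OF P])
  have merged: "label_class P (h \<circ> \<kappa>) (h z) = (if z \<in> {z1, z2} then ?C z1 \<union> ?C z2 else ?C z)"
    if "z \<in> \<kappa> ` P" for z
  proof -
    have "h (\<kappa> B) = h z \<longleftrightarrow> \<kappa> B = z \<or> \<kappa> B \<in> {z1, z2} \<and> z \<in> {z1, z2}" if "B \<in> P" for B
      using only[of "\<kappa> B" z] \<open>z \<in> \<kappa> ` P\<close> that z(4) by (auto simp: doubleton_eq_iff)
    then have "{A \<in> P. h (\<kappa> A) = h z}
        = (if z \<in> {z1, z2} then {A \<in> P. \<kappa> A = z1} \<union> {A \<in> P. \<kappa> A = z2} else {A \<in> P. \<kappa> A = z})"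
      by auto
    then show ?thesis
      by (simp add: label_class_def)
  qed
  have labels: "\<kappa> ` P = {z1, z2} \<union> (\<kappa> ` P - {z1, z2})"
    using z(1,2) by blast
  have "coarsening P (h \<circ> \<kappa>) = (\<lambda>z. label_class P (h \<circ> \<kappa>) (h z)) ` \<kappa> ` P"
    by (simp add: coarsening_def image_image)
  also have "\<dots> = (\<lambda>z. if z \<in> {z1, z2} then ?C z1 \<union> ?C z2 else ?C z) ` \<kappa> ` P"
    using merged by (rule image_cong[OF refl])
  also have "\<dots> = insert (?C z1 \<union> ?C z2) (?C ` (\<kappa> ` P - {z1, z2}))"
    by (subst labels) auto
  also have "?C ` (\<kappa> ` P - {z1, z2}) = coarsening P \<kappa> - {?C z1, ?C z2}"
    using z(1,2) by (simp add: coarsening_def inj_on_image_set_diff[OF inj])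
  finally have "coarsening P (h \<circ> \<kappa>) = insert (?C z1 \<union> ?C z2) (coarsening P \<kappa> - {?C z1, ?C z2})" .
  moreover have "?C z1 \<in> coarsening P \<kappa>" "?C z2 \<in> coarsening P \<kappa>" "?C z1 \<noteq> ?C z2"
    using z(1-3) inj by (auto simp: coarsening_def dest: inj_onD)
  ultimately show ?thesis
    unfolding merge_step_def by blast
qed

lemma card_quot_nbrs_label_class_le:
  assumes "finite P" "z \<in> \<kappa> ` P"
  shows "card (quot_nbrs G (coarsening P \<kappa>) (label_class P \<kappa> z))
    \<le> card (\<kappa> ` \<Union>(quot_nbrs G P ` {A \<in> P. \<kappa> A = z}))"
proof -
  let ?N = "\<Union>(quot_nbrs G P ` {A \<in> P. \<kappa> A = z})"
  have "finite ?N"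
    using assms(1) by (rule finite_subset[rotated]) (auto simp: quot_nbrs_def)
  have "quot_nbrs G (coarsening P \<kappa>) (label_class P \<kappa> z) \<subseteq> label_class P \<kappa> ` \<kappa> ` ?N"
  proof
    fix Y assume Y: "Y \<in> quot_nbrs G (coarsening P \<kappa>) (label_class P \<kappa> z)"
    then obtain u w where uw: "u \<in> label_class P \<kappa> z" "w \<in> Y" "{u, w} \<in> edges G"
      "Y \<noteq> label_class P \<kappa> z" "Y \<in> coarsening P \<kappa>"
      by (auto simp: quot_nbrs_def)
    then obtain B0 where B0: "B0 \<in> P" "Y = label_class P \<kappa> (\<kappa> B0)"
      by (auto simp: coarsening_conv)
    obtain A where A: "A \<in> P" "\<kappa> A = z" "u \<in> A"
      using uw(1) by (auto simp: label_class_def)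
    obtain B where B: "B \<in> P" "\<kappa> B = \<kappa> B0" "w \<in> B"
      using uw(2) B0(2) by (auto simp: label_class_def)
    have "A \<noteq> B"
      using A B B0 uw(4) by auto
    then have "B \<in> ?N"
      using A B uw(3) by (auto simp: quot_nbrs_def)
    then show "Y \<in> label_class P \<kappa> ` \<kappa> ` ?N"
      using B(2) B0(2) by (metis imageI)
  qed
  then have "card (quot_nbrs G (coarsening P \<kappa>) (label_class P \<kappa> z)) \<le> card (label_class P \<kappa> ` \<kappa> ` ?N)"
    using \<open>finite ?N\<close> by (simp add: card_mono)
  also have "\<dots> \<le> card (\<kappa> ` ?N)"
    using \<open>finite ?N\<close> by (simp add: card_image_le)
  finally show ?thesis .
qed

section \<open>Orbit representatives and positions\<close>

lemma perm_extending_bij_betw: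
  assumes "finite S" "bij_betw f S S"
  obtains \<sigma> where "\<And>a. a \<in> S \<Longrightarrow> \<sigma> \<langle>$\<rangle> a = f a" "affected \<sigma> \<subseteq> S"
proof -
  define g where "g a = (if a \<in> S then f a else a)" for a
  have "bij_betw g S S"
    using assms(2) by (rule bij_betw_cong[THEN iffD1, rotated]) (simp add: g_def)
  then have "g permutes S"
    by (rule bij_imp_permutes) (simp add: g_def)
  moreover have "finite {a. g a \<noteq> a}"
    using assms(1) by (rule finite_subset[rotated]) (auto simp: g_def)
  ultimately have "apply (Perm g) = g"
    by (intro Perm_inverse) (simp add: permutes_bij)
  then show ?thesis
    by (intro that[of "Perm g"]) (auto simp: g_def in_affected split: if_splits)
qed

lemma orbit_subset_of_affected_subset:
  assumes "affected \<sigma> \<subseteq> S" "a \<in> S"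
  shows "orbit \<sigma> a \<subseteq> S"
  using assms orbit_subset_eq_affected[of a \<sigma>] not_in_affected_iff_orbit_eq_singleton[of a \<sigma>]
  by (cases "a \<in> affected \<sigma>") auto

lemma apply_power_in_of_affected_subset:
  "affected \<sigma> \<subseteq> S \<Longrightarrow> a \<in> S \<Longrightarrow> (\<sigma> ^ n) \<langle>$\<rangle> a \<in> S"
  using orbit_subset_of_affected_subset[of \<sigma> S a] apply_power_self_in_orbit[of \<sigma> n a] by blast

lemma order_le_card_of_affected_subset:
  "finite S \<Longrightarrow> affected \<sigma> \<subseteq> S \<Longrightarrow> a \<in> S \<Longrightarrow> order \<sigma> a \<le> card S"
  by (metis card_mono card_orbit_eq orbit_subset_of_affected_subset)

definition orbit_rep :: "'a perm \<Rightarrow> 'a \<Rightarrow> 'a" where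
  "orbit_rep \<sigma> a = (SOME r. r \<in> orbit \<sigma> a)"

definition orbit_index :: "'a perm \<Rightarrow> 'a \<Rightarrow> nat" where
  "orbit_index \<sigma> a = (LEAST i. (\<sigma> ^ i) \<langle>$\<rangle> (orbit_rep \<sigma> a) = a)"

lemma orbit_rep_in_orbit: "orbit_rep \<sigma> a \<in> orbit \<sigma> a"
  unfolding orbit_rep_def by (rule someI[of _ a]) simp

lemma orbit_orbit_rep [simp]: "orbit \<sigma> (orbit_rep \<sigma> a) = orbit \<sigma> a"
  by (rule orbit_equiv[OF orbit_rep_in_orbit])

lemma order_orbit_rep [simp]: "order \<sigma> (orbit_rep \<sigma> a) = order \<sigma> a"
  by (simp only: order_def comp_def orbit_orbit_rep)

lemma orbit_rep_apply_power [simp]: "orbit_rep \<sigma> ((\<sigma> ^ n) \<langle>$\<rangle> a) = orbit_rep \<sigma> a"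
  by (simp add: orbit_rep_def)

lemma apply_power_orbit_index: "(\<sigma> ^ orbit_index \<sigma> a) \<langle>$\<rangle> (orbit_rep \<sigma> a) = a"
proof -
  have "a \<in> orbit \<sigma> (orbit_rep \<sigma> a)"
    by simp
  then obtain n where "a = (\<sigma> ^ n) \<langle>$\<rangle> (orbit_rep \<sigma> a)"
    by (rule in_orbitE)
  then show ?thesis
    unfolding orbit_index_def by (rule LeastI[OF sym])
qed

lemma orbit_index_less_order: "orbit_index \<sigma> a < order \<sigma> a"
proof -
  have "(\<sigma> ^ (orbit_index \<sigma> a mod order \<sigma> a)) \<langle>$\<rangle> (orbit_rep \<sigma> a) = a"
    using apply_power_mod_order_eq[of \<sigma> _ "orbit_rep \<sigma> a"] by (simp add: apply_power_orbit_index)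
  then have "orbit_index \<sigma> a \<le> orbit_index \<sigma> a mod order \<sigma> a"
    unfolding orbit_index_def by (rule Least_le)
  then show ?thesis
    using order_greater_zero[of \<sigma> a] by (meson le_less_trans mod_less_divisor)
qed

lemma orbit_index_apply_power:
  "orbit_index \<sigma> ((\<sigma> ^ n) \<langle>$\<rangle> a) = (orbit_index \<sigma> a + n) mod order \<sigma> a"
proof -
  let ?r = "orbit_rep \<sigma> a" and ?b = "(\<sigma> ^ n) \<langle>$\<rangle> a"
  have "(\<sigma> ^ orbit_index \<sigma> ?b) \<langle>$\<rangle> ?r = ?b"
    using apply_power_orbit_index[of \<sigma> ?b] by simp
  also have "\<dots> = (\<sigma> ^ n) \<langle>$\<rangle> ((\<sigma> ^ orbit_index \<sigma> a) \<langle>$\<rangle> ?r)"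
    by (simp only: apply_power_orbit_index)
  also have "\<dots> = (\<sigma> ^ (orbit_index \<sigma> a + n)) \<langle>$\<rangle> ?r"
    by (simp only: apply_sequence power_add[symmetric] add.commute)
  finally have "orbit_index \<sigma> ?b mod order \<sigma> a = (orbit_index \<sigma> a + n) mod order \<sigma> a"
    by (simp add: apply_power_eq_iff)
  then show ?thesis
    using orbit_index_less_order[of \<sigma> ?b] by simp
qed

lemma orbit_rep_index_eqI:
  "orbit_rep \<sigma> a = orbit_rep \<sigma> b \<Longrightarrow> orbit_index \<sigma> a = orbit_index \<sigma> b \<Longrightarrow> a = b"
  by (metis apply_power_orbit_index)

section \<open>Merging the orbits of an automorphism dyadically\<close>

text \<open>The bound is 4 and not 3 because the last block, of the residues from \<open>m * ((n - 1) div m)\<close>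
  to \<open>n - 1\<close>, may be shorter than \<open>m\<close>.\<close>

lemma card_cyclic_window_blocks_le:
  fixes n m s :: nat
  assumes n: "0 < n" and m: "0 < m"
  shows "card ((\<lambda>i. ((s + i) mod n) div m) ` {..<2 * m}) \<le> 4"
proof -
  define x where "x = s mod n"
  define q where "q = x div m"
  let ?S = "(\<lambda>i. ((s + i) mod n) div m) ` {..<2 * m}"
  have "x < n"
    using n by (simp add: x_def)
  have val: "((s + i) mod n) div m = ((x + i) mod n) div m" for i
    by (simp add: x_def mod_add_left_eq)
  have q: "q * m \<le> x" "x < m + q * m"
    using dividend_less_div_times[OF m, of x] by (simp_all add: q_def)
  consider "n \<le> 2 * m" | "x + 2 * m \<le> n" | "2 * m < n" "n < x + 2 * m"
    by linarith
  then show ?thesis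
  proof cases
    case 1
    have "?S \<subseteq> {..<2}"
    proof
      fix v assume "v \<in> ?S"
      then obtain i where "v = ((s + i) mod n) div m"
        by blast
      moreover have "(s + i) mod n < 2 * m"
        using 1 n by (meson mod_less_divisor order_less_le_trans)
      ultimately show "v \<in> {..<2}"
        using m by (simp add: div_less_iff_less_mult)
    qed
    then show ?thesis
      using card_mono[of "{..<2}" ?S] by simp
  next
    case 2
    have "?S \<subseteq> {q..q + 2}"
    proof
      fix v assume "v \<in> ?S"
      then obtain i where i: "i < 2 * m" "v = (x + i) div m"
        using 2 val by auto
      have "q \<le> v"
        unfolding i(2) q_def by (simp add: div_le_mono)
      moreover have "x + i < (q + 3) * m"
        using q i(1) by (simp add: algebra_simps)
      then have "v < q + 3"
        unfolding i(2) by (rule less_mult_imp_div_less)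
      ultimately show "v \<in> {q..q + 2}"
        by simp
    qed
    then show ?thesis
      using card_mono[of "{q..q + 2}" ?S] by simp
  next
    case 3
    define L where "L = (n - 1) div m"
    define W where "W = (x + 2 * m - 1 - n) div m"
    have "?S \<subseteq> {q..L} \<union> {..W}"
    proof
      fix v assume "v \<in> ?S"
      then obtain i where i: "i < 2 * m" "v = ((x + i) mod n) div m"
        using val by auto
      show "v \<in> {q..L} \<union> {..W}"
      proof (cases "x + i < n")
        case True
        then show ?thesis
          using i(2) by (simp add: L_def q_def div_le_mono)
      next
        case False
        then have "(x + i) mod n = x + i - n"
          using \<open>x < n\<close> i(1) 3 by (simp add: le_mod_geq)
        then show ?thesis
          using i by (simp add: W_def div_le_mono)
      qed
    qed
    moreover have "L + W \<le> q + 2"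
    proof -
      have "(L + W) * m \<le> (n - 1) + (x + 2 * m - 1 - n)"
        unfolding L_def W_def add_mult_distrib
        by (intro add_mono div_times_less_eq_dividend)
      also have "\<dots> < (q + 3) * m"
        using q 3 by (simp add: algebra_simps)
      finally show ?thesis
        by (simp add: mult_less_cancel2)
    qed
    ultimately have "card ?S \<le> card {q..L} + card {..W}"
      by (meson card_Un_le card_mono finite_UnI finite_atLeastAtMost finite_atMost order_trans)
    moreover have "q \<le> L"
      using \<open>x < n\<close> by (simp add: q_def L_def div_le_mono)
    ultimately show ?thesis
      using \<open>L + W \<le> q + 2\<close> by simp
  qed
qed

text \<open>\<open>(R, k, x)\<close> stands for the \<open>x\<close>-th block of \<open>2 ^ k\<close> consecutive indices in the orbit
  represented by \<open>R\<close>, and \<open>M\<close> lists the blocks \<open>(R, t)\<close> of the next level already formed.\<close>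

definition block_label :: "nat \<Rightarrow> ('b \<times> nat) set \<Rightarrow> 'b \<Rightarrow> nat \<Rightarrow> 'b \<times> nat \<times> nat" where
  "block_label k M R x = (if (R, x div 2) \<in> M then (R, Suc k, x div 2) else (R, k, x))"

definition merge_blocks :: "nat \<Rightarrow> 'b \<times> nat \<Rightarrow> 'b \<times> nat \<times> nat \<Rightarrow> 'b \<times> nat \<times> nat" where
  "merge_blocks k a v = (case v of (R, l, x) \<Rightarrow> if l = k \<and> (R, x div 2) = a then (R, Suc k, x div 2) else v)"

lemma block_label_insert:
  "a \<notin> M \<Longrightarrow> block_label k (insert a M) R x = merge_blocks k a (block_label k M R x)"
  by (auto simp: block_label_def merge_blocks_def)

locale quotient_automorphism =
  fixes G :: "'a trigraph" and P :: "'a set set" and \<sigma> :: "'a set perm" and D :: nat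
  assumes partition: "partition_on (verts G) P"
    and finite_parts: "finite P"
    and affected_subset: "affected \<sigma> \<subseteq> P"
    and preserves_nbrs:
      "\<And>U W. U \<in> P \<Longrightarrow> W \<in> P \<Longrightarrow> W \<in> quot_nbrs G P U \<longleftrightarrow> \<sigma> \<langle>$\<rangle> W \<in> quot_nbrs G P (\<sigma> \<langle>$\<rangle> U)"
    and degree_le: "\<And>U. U \<in> P \<Longrightarrow> card (quot_nbrs G P U) \<le> D"
begin

lemma apply_power_in: "A \<in> P \<Longrightarrow> (\<sigma> ^ i) \<langle>$\<rangle> A \<in> P"
  using affected_subset by (rule apply_power_in_of_affected_subset)

lemma orbit_rep_in: "A \<in> P \<Longrightarrow> orbit_rep \<sigma> A \<in> P"
  using orbit_subset_of_affected_subset[OF affected_subset] orbit_rep_in_orbit[of \<sigma> A] by (rule subsetD)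

lemma quot_nbrs_apply_power_iff:
  assumes "U \<in> P" "W \<in> P"
  shows "W \<in> quot_nbrs G P U \<longleftrightarrow> (\<sigma> ^ i) \<langle>$\<rangle> W \<in> quot_nbrs G P ((\<sigma> ^ i) \<langle>$\<rangle> U)"
proof (induction i)
  case (Suc i)
  then show ?case
    using preserves_nbrs[OF apply_power_in[OF assms(1)] apply_power_in[OF assms(2)], of i]
    by (simp add: apply_sequence)
qed simp

lemma quot_nbrs_apply_power:
  assumes "U \<in> P"
  shows "quot_nbrs G P ((\<sigma> ^ i) \<langle>$\<rangle> U) \<subseteq> (\<lambda>B. (\<sigma> ^ i) \<langle>$\<rangle> B) ` quot_nbrs G P U"
proof
  fix W' assume W': "W' \<in> quot_nbrs G P ((\<sigma> ^ i) \<langle>$\<rangle> U)"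
  have "inj_on (\<lambda>B. (\<sigma> ^ i) \<langle>$\<rangle> B) P"
    by (simp add: inj_on_def apply_inj)
  moreover have "(\<lambda>B. (\<sigma> ^ i) \<langle>$\<rangle> B) ` P \<subseteq> P"
    using apply_power_in by blast
  ultimately have "(\<lambda>B. (\<sigma> ^ i) \<langle>$\<rangle> B) ` P = P"
    using finite_parts by (simp add: endo_inj_surj)
  moreover have "W' \<in> P"
    using W' by (simp add: quot_nbrs_def)
  ultimately obtain W where W: "W \<in> P" "W' = (\<sigma> ^ i) \<langle>$\<rangle> W"
    by (metis imageE)
  then have "W \<in> quot_nbrs G P U"
    using W' quot_nbrs_apply_power_iff[OF assms W(1), of i] by simp
  then show "W' \<in> (\<lambda>B. (\<sigma> ^ i) \<langle>$\<rangle> B) ` quot_nbrs G P U"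
    using W(2) by (rule rev_image_eqI)
qed

lemma card_quot_nbrs_coarsening_le:
  assumes R: "R \<in> P" and z: "z \<in> \<kappa> ` P"
    and members: "\<And>A. A \<in> P \<Longrightarrow> \<kappa> A = z \<Longrightarrow> \<exists>i\<in>I. A = (\<sigma> ^ i) \<langle>$\<rangle> R"
    and spread: "\<And>B. B \<in> quot_nbrs G P R \<Longrightarrow> card (\<kappa> ` (\<lambda>i. (\<sigma> ^ i) \<langle>$\<rangle> B) ` I) \<le> c"
  shows "card (quot_nbrs G (coarsening P \<kappa>) (label_class P \<kappa> z)) \<le> D * c"
proof -
  let ?N = "quot_nbrs G P R"
  let ?F = "\<lambda>B. \<kappa> ` (\<lambda>i. (\<sigma> ^ i) \<langle>$\<rangle> B) ` I"
  have "finite ?N"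
    using finite_parts by (rule finite_subset[rotated]) (auto simp: quot_nbrs_def)
  have sub: "\<kappa> ` \<Union>(quot_nbrs G P ` {A \<in> P. \<kappa> A = z}) \<subseteq> (\<Union>B\<in>?N. ?F B)"
  proof
    fix v assume "v \<in> \<kappa> ` \<Union>(quot_nbrs G P ` {A \<in> P. \<kappa> A = z})"
    then obtain A W where A: "A \<in> P" "\<kappa> A = z" "W \<in> quot_nbrs G P A" "v = \<kappa> W"
      by auto
    obtain i where i: "i \<in> I" "A = (\<sigma> ^ i) \<langle>$\<rangle> R"
      using members[OF A(1,2)] by blast
    then obtain B where "B \<in> ?N" "W = (\<sigma> ^ i) \<langle>$\<rangle> B"
      using A(3) quot_nbrs_apply_power[OF R, of i] by blast
    then show "v \<in> (\<Union>B\<in>?N. ?F B)"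
      using i(1) A(4) by blast
  qed
  have "(\<Union>B\<in>?N. ?F B) \<subseteq> \<kappa> ` P"
    using apply_power_in by (auto simp: quot_nbrs_def)
  then have "finite (\<Union>B\<in>?N. ?F B)"
    using finite_parts by (simp add: finite_subset)
  then have "card (\<kappa> ` \<Union>(quot_nbrs G P ` {A \<in> P. \<kappa> A = z})) \<le> card (\<Union>B\<in>?N. ?F B)"
    using sub by (rule card_mono)
  also have "\<dots> \<le> (\<Sum>B\<in>?N. card (?F B))"
    using \<open>finite ?N\<close> by (rule card_UN_le)
  also have "\<dots> \<le> card ?N * c"
    using spread sum_bounded_above[of ?N "\<lambda>B. card (?F B)" c] by simp
  also have "\<dots> \<le> D * c"
    using degree_le[OF R] by simp
  finally show ?thesis
    using card_quot_nbrs_label_class_le[OF finite_parts z, of G] by linarith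
qed

definition dyadic_label :: "nat \<Rightarrow> ('a set \<times> nat) set \<Rightarrow> 'a set \<Rightarrow> 'a set \<times> nat \<times> nat" where
  "dyadic_label k M A = block_label k M (orbit_rep \<sigma> A) (orbit_index \<sigma> A div 2 ^ k)"

lemma dyadic_label_apply_power:
  "dyadic_label k M ((\<sigma> ^ i) \<langle>$\<rangle> B)
    = block_label k M (orbit_rep \<sigma> B) (((orbit_index \<sigma> B + i) mod order \<sigma> B) div 2 ^ k)"
  by (simp add: dyadic_label_def orbit_index_apply_power)

lemma dyadic_label_window:
  assumes "dyadic_label k M A = (R, l, x)"
  shows "orbit_rep \<sigma> A = R" "x * 2 ^ l \<le> orbit_index \<sigma> A" "orbit_index \<sigma> A < x * 2 ^ l + 2 * 2 ^ k"
proof -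
  let ?i = "orbit_index \<sigma> A"
  have div_bounds: "?i div m * m \<le> ?i" "?i < ?i div m * m + m" if "0 < m" for m
    using that dividend_less_div_times[of m ?i] by simp_all
  have "R = orbit_rep \<sigma> A \<and> x * 2 ^ l \<le> ?i \<and> ?i < x * 2 ^ l + 2 * 2 ^ k"
  proof (cases "(orbit_rep \<sigma> A, ?i div 2 ^ k div 2) \<in> M")
    case True
    have "?i div 2 ^ k div 2 = ?i div 2 ^ Suc k"
      by (metis div_mult2_eq power_Suc2)
    then have "R = orbit_rep \<sigma> A" "l = Suc k" "x = ?i div 2 ^ l"
      using True assms by (auto simp: dyadic_label_def block_label_def)
    then show ?thesis
      using div_bounds[of "2 ^ l"] by simp
  next
    case False
    then have "R = orbit_rep \<sigma> A" "l = k" "x = ?i div 2 ^ l"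
      using assms by (auto simp: dyadic_label_def block_label_def)
    then show ?thesis
      using div_bounds[of "2 ^ l"] by simp
  qed
  then show "orbit_rep \<sigma> A = R" "x * 2 ^ l \<le> ?i" "?i < x * 2 ^ l + 2 * 2 ^ k"
    by auto
qed

lemma card_quot_nbrs_dyadic_le:
  assumes z: "z \<in> dyadic_label k M ` P"
  shows "card (quot_nbrs G (coarsening P (dyadic_label k M)) (label_class P (dyadic_label k M) z)) \<le> D * 4"
proof -
  obtain R l x where zRlx: "z = (R, l, x)"
    by (cases z) auto
  obtain A0 where "A0 \<in> P" "dyadic_label k M A0 = z"
    using z by blast
  then have R: "R \<in> P"
    using dyadic_label_window(1) orbit_rep_in zRlx by blast
  define I where "I = (\<lambda>j. x * 2 ^ l + j) ` {..<2 * 2 ^ k}"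
  show ?thesis
  proof (rule card_quot_nbrs_coarsening_le[OF R z])
    fix A assume "A \<in> P" "dyadic_label k M A = z"
    then have "orbit_rep \<sigma> A = R" "orbit_index \<sigma> A \<in> I"
      using dyadic_label_window[of k M A R l x] zRlx
      by (auto simp: I_def image_iff intro!: bexI[of _ "orbit_index \<sigma> A - x * 2 ^ l"])
    then show "\<exists>i\<in>I. A = (\<sigma> ^ i) \<langle>$\<rangle> R"
      by (metis apply_power_orbit_index)
  next
    fix B
    let ?s = "orbit_index \<sigma> B + x * 2 ^ l"
    have "dyadic_label k M ` (\<lambda>i. (\<sigma> ^ i) \<langle>$\<rangle> B) ` I
        = block_label k M (orbit_rep \<sigma> B) ` (\<lambda>j. ((?s + j) mod order \<sigma> B) div 2 ^ k) ` {..<2 * 2 ^ k}"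
      by (simp add: I_def image_image dyadic_label_apply_power add.assoc)
    also have "card \<dots> \<le> card ((\<lambda>j. ((?s + j) mod order \<sigma> B) div 2 ^ k) ` {..<2 * 2 ^ k})"
      by (rule card_image_le) simp
    also have "\<dots> \<le> 4"
      by (rule card_cyclic_window_blocks_le) simp_all
    finally show "card (dyadic_label k M ` (\<lambda>i. (\<sigma> ^ i) \<langle>$\<rangle> B) ` I) \<le> 4" .
  qed
qed

lemma max_red_degree_dyadic_le:
  "max_red_degree (quot_trigraph G (coarsening P (dyadic_label k M))) \<le> 4 * D"
proof -
  have "max_degree (quot_trigraph G (coarsening P (dyadic_label k M))) \<le> D * 4"
  proof (rule max_degree_quot_trigraph_le)
    show "finite (coarsening P (dyadic_label k M))"
      using finite_parts by (rule finite_coarsening)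
    fix X assume "X \<in> coarsening P (dyadic_label k M)"
    then obtain z where "z \<in> dyadic_label k M ` P" "X = label_class P (dyadic_label k M) z"
      by (auto simp: coarsening_def)
    then show "card (quot_nbrs G (coarsening P (dyadic_label k M)) X) \<le> D * 4"
      using card_quot_nbrs_dyadic_le[of z k M] by simp
  qed
  then show ?thesis
    using max_red_degree_le_max_degree_quot_trigraph[OF finite_coarsening[OF finite_parts], of G "dyadic_label k M"]
    by linarith
qed

lemma dyadic_label_cases:
  assumes "dyadic_label k M A = (R, l, x)"
  shows "l = k \<and> (R, x div 2) \<notin> M \<or> l = Suc k \<and> (R, x) \<in> M"
  using assms by (auto simp: dyadic_label_def block_label_def split: if_splits)

lemma dyadic_label_insert: "a \<notin> M \<Longrightarrow> dyadic_label k (insert a M) = merge_blocks k a \<circ> dyadic_label k M"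
  by (simp add: fun_eq_iff dyadic_label_def block_label_insert)

lemma merge_blocks_identifies_only:
  assumes a: "a \<notin> M" and u: "u \<in> dyadic_label k M ` P" and v: "v \<in> dyadic_label k M ` P"
    and eq: "merge_blocks k a u = merge_blocks k a v"
  shows "u = v \<or> {u, v} = {(fst a, k, 2 * snd a), (fst a, k, 2 * snd a + 1)}"
proof -
  have halves: "y div 2 = t \<Longrightarrow> y = 2 * t \<or> y = 2 * t + 1" for y t :: nat
    by presburger
  obtain R1 l1 x1 R2 l2 x2 where uv: "u = (R1, l1, x1)" "v = (R2, l2, x2)"
    by (cases u, cases v) auto
  have "l1 = k \<and> (R1, x1 div 2) \<notin> M \<or> l1 = Suc k \<and> (R1, x1) \<in> M"
    "l2 = k \<and> (R2, x2 div 2) \<notin> M \<or> l2 = Suc k \<and> (R2, x2) \<in> M"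
    using u v uv dyadic_label_cases by blast+
  then show ?thesis
    using a eq uv halves[of x1 "snd a"] halves[of x2 "snd a"]
    by (cases a) (auto simp: merge_blocks_def split: if_splits)
qed

lemma dyadic_merge_step:
  assumes "a \<notin> M"
  shows "(bounded_merge G (4 * D))\<^sup>*\<^sup>* (coarsening P (dyadic_label k M))
    (coarsening P (dyadic_label k (insert a M)))"
proof -
  let ?\<kappa> = "dyadic_label k M" and ?h = "merge_blocks k a"
  define z1 z2 where "z1 = (fst a, k, 2 * snd a)" and "z2 = (fst a, k, 2 * snd a + 1)"
  have only: "u = v \<or> {u, v} = {z1, z2}"
    if "u \<in> ?\<kappa> ` P" "v \<in> ?\<kappa> ` P" "?h u = ?h v" for u v
    using merge_blocks_identifies_only[OF assms that] by (simp add: z1_def z2_def)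
  have eq: "coarsening P (dyadic_label k (insert a M)) = coarsening P (?h \<circ> ?\<kappa>)"
    by (simp add: dyadic_label_insert[OF assms])
  show ?thesis
  proof (cases "z1 \<in> ?\<kappa> ` P \<and> z2 \<in> ?\<kappa> ` P")
    case True
    moreover have "z1 \<noteq> z2" "?h z1 = ?h z2"
      by (auto simp: z1_def z2_def merge_blocks_def)
    ultimately have "merge_step (coarsening P ?\<kappa>) (coarsening P (?h \<circ> ?\<kappa>))"
      using merge_step_coarsening_comp[OF partition _ _ _ _ only] by blast
    then have "bounded_merge G (4 * D) (coarsening P ?\<kappa>) (coarsening P (dyadic_label k (insert a M)))"
      using max_red_degree_dyadic_le[of k "insert a M"] unfolding bounded_merge_def eq by blast
    then show ?thesis
      by (rule r_into_rtranclp)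
  next
    case False
    have "inj_on ?h (?\<kappa> ` P)"
    proof (rule inj_onI)
      fix u v assume uv: "u \<in> ?\<kappa> ` P" "v \<in> ?\<kappa> ` P" "?h u = ?h v"
      then have "u = v \<or> {u, v} = {z1, z2}"
        by (rule only)
      then show "u = v"
        using False uv(1,2) by (auto simp: doubleton_eq_iff)
    qed
    then show ?thesis
      by (simp add: eq coarsening_comp_inj)
  qed
qed

lemma dyadic_round:
  "(bounded_merge G (4 * D))\<^sup>*\<^sup>* (coarsening P (dyadic_label k {})) (coarsening P (dyadic_label (Suc k) {}))"
proof -
  have steps: "(bounded_merge G (4 * D))\<^sup>*\<^sup>* (coarsening P (dyadic_label k {})) (coarsening P (dyadic_label k F))"
    if "finite F" for F
    using that
  proof (induction F rule: finite_induct)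
    case (insert a F)
    then show ?case
      using dyadic_merge_step[of a F k] by (meson rtranclp_trans)
  qed simp
  define T where "T = (\<lambda>A. (orbit_rep \<sigma> A, orbit_index \<sigma> A div 2 ^ k div 2)) ` P"
  have "coarsening P (dyadic_label k T) = coarsening P (dyadic_label (Suc k) {})"
  proof (rule coarsening_cong)
    fix A assume "A \<in> P"
    moreover have "orbit_index \<sigma> A div 2 ^ k div 2 = orbit_index \<sigma> A div 2 ^ Suc k"
      by (metis div_mult2_eq power_Suc2)
    ultimately show "dyadic_label k T A = dyadic_label (Suc k) {} A"
      by (auto simp: dyadic_label_def block_label_def T_def)
  qed
  then show ?thesis
    using steps[of T] finite_parts by (simp add: T_def)
qed

lemma coarsening_dyadic_label_0: "coarsening P (dyadic_label 0 {}) = P"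
  by (rule coarsening_inj)
    (simp add: inj_on_def dyadic_label_def block_label_def, metis orbit_rep_index_eqI)

lemma dyadic_rounds: "(bounded_merge G (4 * D))\<^sup>*\<^sup>* P (coarsening P (dyadic_label k {}))"
proof (induction k)
  case 0
  then show ?case
    by (simp add: coarsening_dyadic_label_0)
next
  case (Suc k)
  then show ?case
    using dyadic_round by (rule rtranclp_trans)
qed

lemma dyadic_label_final:
  assumes "card P \<le> 2 ^ K" "A \<in> P"
  shows "dyadic_label K {} A = (orbit_rep \<sigma> A, K, 0)"
proof -
  have "orbit_index \<sigma> A < 2 ^ K"
    using orbit_index_less_order[of \<sigma> A] order_le_card_of_affected_subset[OF finite_parts affected_subset assms(2)]
      assms(1) by linarith
  then show ?thesis
    by (simp add: dyadic_label_def block_label_def)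
qed

lemma bounded_merges_to_orbit_coarsening:
  "(bounded_merge G (4 * D))\<^sup>*\<^sup>* P (coarsening P (orbit_rep \<sigma>))"
proof -
  have "card P \<le> 2 ^ card P"
    by (simp add: less_imp_le)
  then have "coarsening P (dyadic_label (card P) {}) = coarsening P ((\<lambda>R. (R, card P, 0::nat)) \<circ> orbit_rep \<sigma>)"
    by (intro coarsening_cong) (simp add: dyadic_label_final)
  also have "\<dots> = coarsening P (orbit_rep \<sigma>)"
    by (rule coarsening_comp_inj) (simp add: inj_on_def)
  finally show ?thesis
    using dyadic_rounds[of "card P"] by simp
qed

lemma card_orbit_coarsening_less:
  assumes "A \<in> P" "\<sigma> \<langle>$\<rangle> A \<noteq> A"
  shows "card (coarsening P (orbit_rep \<sigma>)) < card P"
proof -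
  have "\<sigma> \<langle>$\<rangle> A \<in> P" "orbit_rep \<sigma> (\<sigma> \<langle>$\<rangle> A) = orbit_rep \<sigma> A"
    using apply_power_in[OF assms(1), of 1] orbit_rep_apply_power[of \<sigma> 1 A] by simp_all
  then have "\<not> inj_on (orbit_rep \<sigma>) P"
    using assms by (metis inj_onD)
  then have "card (orbit_rep \<sigma> ` P) < card P"
    using finite_parts card_image_le[OF finite_parts, of "orbit_rep \<sigma>"] inj_on_iff_eq_card by fastforce
  moreover have "card (coarsening P (orbit_rep \<sigma>)) \<le> card (orbit_rep \<sigma> ` P)"
    using finite_parts by (simp add: coarsening_def card_image_le)
  ultimately show ?thesis
    by linarith
qed

lemma max_degree_orbit_coarsening_le:
  "max_degree (quot_trigraph G (coarsening P (orbit_rep \<sigma>))) \<le> D"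
proof (rule max_degree_quot_trigraph_le)
  show "finite (coarsening P (orbit_rep \<sigma>))"
    using finite_parts by (rule finite_coarsening)
  fix X assume "X \<in> coarsening P (orbit_rep \<sigma>)"
  then obtain R where z: "R \<in> orbit_rep \<sigma> ` P" and X: "X = label_class P (orbit_rep \<sigma>) R"
    by (auto simp: coarsening_def)
  then have "R \<in> P"
    using orbit_rep_in by blast
  have "card (quot_nbrs G (coarsening P (orbit_rep \<sigma>)) X) \<le> D * 1"
    unfolding X
  proof (rule card_quot_nbrs_coarsening_le[OF \<open>R \<in> P\<close> z, where I = UNIV])
    show "\<exists>i\<in>UNIV. A = (\<sigma> ^ i) \<langle>$\<rangle> R" if "orbit_rep \<sigma> A = R" for A
      using apply_power_orbit_index[of \<sigma> A] that by blast
    show "card (orbit_rep \<sigma> ` (\<lambda>i. (\<sigma> ^ i) \<langle>$\<rangle> B) ` UNIV) \<le> 1" for B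
      by (simp add: image_image)
  qed
  then show "card (quot_nbrs G (coarsening P (orbit_rep \<sigma>)) X) \<le> D"
    by simp
qed

end

section \<open>Reaching an asymmetric quotient\<close>

lemma coarsening_step_of_not_asymmetric:
  assumes G: "is_trigraph G" and P: "partition_on (verts G) P"
    and deg: "max_degree (quot_trigraph G P) \<le> D" and "\<not> asymmetric (quot_trigraph G P)"
  obtains Q where "(bounded_merge G (4 * D))\<^sup>*\<^sup>* P Q" "card Q < card P"
    "partition_on (verts G) Q" "max_degree (quot_trigraph G Q) \<le> D"
proof -
  have fin: "finite P"
    using G partition_onD1[OF P] by (auto simp: is_trigraph_def dest: finite_UnionD)
  obtain f A where f: "bij_betw f P P"
    "\<And>U W. U \<in> P \<Longrightarrow> W \<in> P \<Longrightarrow> {U, W} \<in> edges (quot_trigraph G P) \<longleftrightarrow> {f U, f W} \<in> edges (quot_trigraph G P)"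
    and A: "A \<in> P" "f A \<noteq> A"
    using \<open>\<not> asymmetric (quot_trigraph G P)\<close> unfolding asymmetric_def verts_quot_trigraph by blast
  obtain \<sigma> where \<sigma>: "\<And>U. U \<in> P \<Longrightarrow> \<sigma> \<langle>$\<rangle> U = f U" "affected \<sigma> \<subseteq> P"
    using perm_extending_bij_betw[OF fin f(1)] by blast
  interpret quotient_automorphism G P \<sigma> D
  proof
    show "W \<in> quot_nbrs G P U \<longleftrightarrow> \<sigma> \<langle>$\<rangle> W \<in> quot_nbrs G P (\<sigma> \<langle>$\<rangle> U)" if "U \<in> P" "W \<in> P" for U W
    proof -
      have "f U \<in> P" "f W \<in> P"
        using f(1) that by (auto dest: bij_betw_apply)
      then show ?thesis
        using that f(2)[OF that] edge_quot_trigraph_iff[of U P W G] edge_quot_trigraph_iff[of "f U" P "f W" G]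
        by (simp add: \<sigma>(1))
    qed
    show "card (quot_nbrs G P U) \<le> D" if "U \<in> P" for U
      using card_quot_nbrs_le_max_degree[OF fin that, of G] deg by linarith
  qed (use P fin \<sigma>(2) in auto)
  show ?thesis
  proof
    show "card (coarsening P (orbit_rep \<sigma>)) < card P"
      using card_orbit_coarsening_less[OF A(1)] A \<sigma>(1) by simp
  qed (use bounded_merges_to_orbit_coarsening partition_on_coarsening[OF P]
      max_degree_orbit_coarsening_le in auto)
qed

lemma exists_asymmetric_coarsening:
  assumes G: "is_trigraph G"
  shows "partition_on (verts G) P \<Longrightarrow> max_degree (quot_trigraph G P) \<le> D \<Longrightarrow>
    \<exists>Q. (bounded_merge G (4 * D))\<^sup>*\<^sup>* P Q \<and> asymmetric (quot_trigraph G Q)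
      \<and> max_degree (quot_trigraph G Q) \<le> D"
proof (induction "card P" arbitrary: P rule: less_induct)
  case less
  show ?case
  proof (cases "asymmetric (quot_trigraph G P)")
    case False
    then obtain Q where Q: "(bounded_merge G (4 * D))\<^sup>*\<^sup>* P Q" "card Q < card P"
      "partition_on (verts G) Q" "max_degree (quot_trigraph G Q) \<le> D"
      using coarsening_step_of_not_asymmetric[OF G less.prems] by blast
    then show ?thesis
      using less.hyps[OF Q(2-4)] by (meson rtranclp_trans)
  qed (use less.prems in auto)
qed

theorem mainTheorem15:
  fixes G :: "'a trigraph"
  assumes "is_trigraph G"
  shows "\<exists>ps. partial_contraction_sequence G ps
           \<and> seq_width G ps \<le> 4 * max_degree G
           \<and> asymmetric (quot_trigraph G (last ps))
           \<and> max_degree (quot_trigraph G (last ps)) \<le> max_degree G"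
proof -
  let ?S = "singletons (verts G)"
  have S: "partition_on (verts G) ?S"
    by (simp add: singletons_def partition_on_singletons)
  have deg_S: "max_degree (quot_trigraph G ?S) \<le> max_degree G"
    using assms by (rule max_degree_quot_singletons)
  then obtain P where P: "(bounded_merge G (4 * max_degree G))\<^sup>*\<^sup>* ?S P"
    "asymmetric (quot_trigraph G P)" "max_degree (quot_trigraph G P) \<le> max_degree G"
    using exists_asymmetric_coarsening[OF assms S] by blast
  have "max_red_degree (quot_trigraph G ?S) \<le> 4 * max_degree G"
    using max_red_degree_le_max_degree_quot_trigraph[of ?S G] deg_S assms
    by (simp add: singletons_def is_trigraph_def)
  then obtain ps where "partial_contraction_sequence G ps" "seq_width G ps \<le> 4 * max_degree G" "last ps = P"
    using partial_contraction_sequence_of_bounded_merges[OF P(1)] by blast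
  then show ?thesis
    using P(2,3) by blast
qed

end
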